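(* Let $X$ be a non-reflexive real Banach space. Let $Z=X\times X^*$ with norm $\|(x,x^* )\|=\sqrt{\|x\|^2+\|x^*\|^2}$, so that $Z^*=X^*\times X^{**}$ with norm $\|(y^*,y^{**})\|=\sqrt{\|y^*\|^2+\|y^{**}\|^2}$, paired with $Z$ by $\langle (x,x^* ),(y^*,y^{**})\rangle=\langle x,y^*\rangle+\langle y^{**},x^*\rangle$. Define $h:Z\times Z^*\to\mathbb{R}\cup\{+\infty\}$ by $$h((x,x^* ),(y^*,y^{**}))=\begin{cases}\sqrt{\|x-y^{**}\|^2+\|x^*+y^*\|^2}, & \text{if } y^{**}\in X \text{ and } \|y^*\|^2+\|y^{**}\|^2\leq 1,\\ +\infty,&\text{otherwise.}\end{cases}$$ Then: 1. $h$ is a closed (lower semicontinuous) convex function, $P_2(D(h))$ is bounded, $h(z,z^* )\geq\langle z,z^*\rangle$ and $(\mathcal{J}h)(z,z^* )\geq\langle z,z^*\rangle$ for all $(z,z^* )\in Z\times Z^*$; 2. $T=\{(z,z^* )\in Z\times Z^*\;|\;(\mathcal{J}h)(z,z^* )=\langle z,z^*\rangle\}$ is a maximal monotone operator with bounded range, and $\mathcal{J}h\in\mathcal{F}_T$; 3. $T$ is not of Gossez type (D).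
   Context: $X$ is identified with its canonical image in $X^{**}$, and $Z$ with its image in $Z^{**}=X^{**}\times X^{***}$. $P_1,P_2$ are the canonical projections of $Z\times Z^*$ onto $Z$ and $Z^*$; $D(f)=\{w\;|\;f(w)<\infty\}$. The conjugate of $h$ is $h^*:Z^*\times Z^{**}\to\mathbb{R}\cup\{\pm\infty\}$, $h^*(w^*,w^{**})=\sup_{(z,z^* )\in Z\times Z^*}\langle z,w^*\rangle+\langle w^{**},z^*\rangle-h(z,z^* )$, and $(\mathcal{J}h)(z,z^* )=h^*(z^*,z)$ for $(z,z^* )\in Z\times Z^*$. An operator $T:Z\rightrightarrows Z^*$ is a subset of $Z\times Z^*$, with range $P_2T$; it is monotone if $\langle z-w,z^*-w^*\rangle\geq 0$ for all $(z,z^* ),(w,w^* )\in T$, and maximal monotone if it is monotone and not properly contained in another monotone operator. For maximal monotone $T$, $\mathcal{F}_T$ is the set of convex lower semicontinuous $g:Z\times Z^*\to\mathbb{R}\cup\{\pm\infty\}$ with $g(z,z^* )\geq\langle z,z^*\rangle$ everywhere and equality on $T$. A maximal monotone $T:Z\rightrightarrows Z^*$ is of Gossez type (D) if every $(z^{**},z^* )\in Z^{**}\times Z^*$ satisfying $\langle z^{**}-w,z^*-w^*\rangle\geq 0$ for all $(w,w^* )\in T$ is the limit, in the weak-$*$ topology of $Z^{**}$ times the norm topology of $Z^*$, of a bounded net of points of $T$. *)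

theory Defs
  imports "HOL-Analysis.Analysis"
begin

type_synonym 'a dual = "'a \<Rightarrow>\<^sub>L real"

definition canon :: "'a::real_normed_vector \<Rightarrow> 'a dual dual" where
  "canon x = Blinfun (\<lambda>f. blinfun_apply f x)"

text \<open>Z = X \<times> X*, Z* = X* \<times> X**, Z** = X** \<times> X***; duality pairings.\<close>
definition pairZ :: "'a::real_normed_vector \<times> 'a dual \<Rightarrow> 'a dual \<times> 'a dual dual \<Rightarrow> real" where
  "pairZ z w = blinfun_apply (fst w) (fst z) + blinfun_apply (snd w) (snd z)"

definition pairZZ :: "'a::real_normed_vector dual dual \<times> 'a dual dual dual \<Rightarrow> 'a dual \<times> 'a dual dual \<Rightarrow> real" where
  "pairZZ u w = blinfun_apply (fst u) (fst w) + blinfun_apply (snd u) (snd w)"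

definition embZ :: "'a::real_normed_vector \<times> 'a dual \<Rightarrow> 'a dual dual \<times> 'a dual dual dual" where
  "embZ z = (canon (fst z), canon (snd z))"

definition hfun :: "('a::real_normed_vector \<times> 'a dual) \<times> ('a dual \<times> 'a dual dual) \<Rightarrow> ereal" where
  "hfun p = (let x = fst (fst p); xs = snd (fst p); ys = fst (snd p); yss = snd (snd p) in
     if yss \<in> range canon \<and> (norm ys)\<^sup>2 + (norm yss)\<^sup>2 \<le> 1
     then ereal (sqrt ((norm (canon x - yss))\<^sup>2 + (norm (xs + ys))\<^sup>2))
     else \<infinity>)"

definition conjZ :: "(('a::real_normed_vector \<times> 'a dual) \<times> ('a dual \<times> 'a dual dual) \<Rightarrow> ereal)
    \<Rightarrow> ('a dual \<times> 'a dual dual) \<times> ('a dual dual \<times> 'a dual dual dual) \<Rightarrow> ereal" where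
  "conjZ h q = (SUP p. ereal (pairZ (fst p) (fst q) + pairZZ (snd q) (snd p)) - h p)"

definition JZ :: "(('a::real_normed_vector \<times> 'a dual) \<times> ('a dual \<times> 'a dual dual) \<Rightarrow> ereal)
    \<Rightarrow> ('a \<times> 'a dual) \<times> ('a dual \<times> 'a dual dual) \<Rightarrow> ereal" where
  "JZ h p = conjZ h (snd p, embZ (fst p))"

definition ext_convex :: "('b::real_vector \<Rightarrow> ereal) \<Rightarrow> bool" where
  "ext_convex f \<longleftrightarrow> convex {(w, t::real). f w \<le> ereal t}"

definition ext_closed :: "('b::topological_space \<Rightarrow> ereal) \<Rightarrow> bool" where
  "ext_closed f \<longleftrightarrow> closed {(w, t::real). f w \<le> ereal t}"

definition monotone_opZ :: "(('a::real_normed_vector \<times> 'a dual) \<times> ('a dual \<times> 'a dual dual)) set \<Rightarrow> bool" where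
  "monotone_opZ T \<longleftrightarrow> (\<forall>p\<in>T. \<forall>q\<in>T. pairZ (fst p - fst q) (snd p - snd q) \<ge> 0)"

definition maximal_monotoneZ :: "(('a::real_normed_vector \<times> 'a dual) \<times> ('a dual \<times> 'a dual dual)) set \<Rightarrow> bool" where
  "maximal_monotoneZ T \<longleftrightarrow> monotone_opZ T \<and> (\<forall>S. monotone_opZ S \<and> T \<subseteq> S \<longrightarrow> S = T)"

definition fitz_family :: "(('a::real_normed_vector \<times> 'a dual) \<times> ('a dual \<times> 'a dual dual)) set
    \<Rightarrow> (('a \<times> 'a dual) \<times> ('a dual \<times> 'a dual dual) \<Rightarrow> ereal) \<Rightarrow> bool" where
  "fitz_family T g \<longleftrightarrow> ext_convex g \<and> ext_closed g
     \<and> (\<forall>p. g p \<ge> ereal (pairZ (fst p) (snd p)))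
     \<and> (\<forall>p\<in>T. g p = ereal (pairZ (fst p) (snd p)))"

text \<open>Nets are represented by filters on Z \<times> Z* (the net being the identity map);
  "bounded net of points of T" means the filter lives on a bounded subset of T.
  Convergence: weak-* in Z** (tested against every element of Z*) in the first component,
  norm in Z* in the second.\<close>
definition gossez_D :: "(('a::real_normed_vector \<times> 'a dual) \<times> ('a dual \<times> 'a dual dual)) set \<Rightarrow> bool" where
  "gossez_D T \<longleftrightarrow> maximal_monotoneZ T \<and>
     (\<forall>(zss :: 'a dual dual \<times> 'a dual dual dual) (zs :: 'a dual \<times> 'a dual dual).
        (\<forall>q\<in>T. pairZZ (zss - embZ (fst q)) (zs - snd q) \<ge> 0) \<longrightarrow>
        (\<exists>F B. F \<noteq> bot \<and> B \<subseteq> T \<and> bounded B \<and> F \<le> principal B \<and>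
           (\<forall>ws. ((\<lambda>p. pairZ (fst p) ws) \<longlongrightarrow> pairZZ zss ws) F) \<and>
           ((\<lambda>p. snd p) \<longlongrightarrow> zs) F))"

end

theory Submission
  imports Defs
begin

text \<open>
  Write \<open>z = (x, x\<^sup>*)\<close>, \<open>z\<^sup>* = (y\<^sup>*, y\<^sup>*\<^sup>*)\<close> and let \<open>gap (z, z\<^sup>*) = (x\<^sup>* + y\<^sup>*, x - y\<^sup>*\<^sup>*) \<in> Z\<^sup>*\<close>.
  For the symmetric form \<open>[(a, b), (y, Y)] = b y + Y a\<close> on \<open>Z\<^sup>*\<close> one has
  \<open>\<langle>z, z\<^sup>*\<rangle> = [gap (z, z\<^sup>*), z\<^sup>*]\<close> and, by Cauchy-Schwarz, \<open>[A, w] \<le> \<parallel>A\<parallel> \<parallel>w\<parallel>\<close>.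
  Now \<open>h = \<parallel>gap\<parallel>\<close> on its domain, and testing the conjugate against the points with
  \<open>gap = 0\<close> shows that \<open>\<J>h = \<parallel>gap\<parallel>\<close> on the unit ball of \<open>Z\<^sup>*\<close> and \<open>+\<infinity>\<close> outside. So
  \<open>T = {\<parallel>z\<^sup>*\<parallel> \<le> 1, [gap, z\<^sup>*] = \<parallel>gap\<parallel>}\<close>, and monotonicity is the Cauchy-Schwarz bound.

  A point \<open>q\<close> monotonically related to \<open>T\<close> has \<open>\<parallel>z\<^sup>*\<^sub>q\<parallel> \<le> 1\<close>: otherwise the
  Bishop-Phelps theorem provides a norm-attaining \<open>a \<in> X\<^sup>*\<close> almost norming the
  \<open>X\<^sup>*\<^sup>*\<close>-component of \<open>z\<^sup>*\<^sub>q\<close>, and a ray \<open>gap = \<lambda>A\<close> (\<open>\<lambda> \<rightarrow> \<infinity>\<close>) inside \<open>T\<close>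
  built from it violates monotonicity. Comparing \<open>q\<close> with the points of \<open>T\<close> where
  \<open>gap = 0\<close> then gives \<open>[gap q, z\<^sup>*\<^sub>q] = \<parallel>gap q\<parallel>\<close>, so \<open>q \<in> T\<close>.

  Finally, for \<open>Y \<in> X\<^sup>*\<^sup>* - X\<close> with \<open>\<parallel>Y\<parallel> = 1/2\<close> the point \<open>((Y, 0), (0, Y))\<close> is
  monotonically related to \<open>T\<close>. Points of \<open>T\<close> with \<open>\<parallel>z\<^sup>*\<parallel> < 1\<close> have \<open>gap = 0\<close>,
  i.e. \<open>y\<^sup>*\<^sup>* \<in> X\<close>, so a net of \<open>T\<close> with \<open>z\<^sup>* \<rightarrow> (0, Y)\<close> in norm would put \<open>Y\<close> into
  the closed subspace \<open>X\<close> of \<open>X\<^sup>*\<^sup>*\<close>.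
\<close>

section \<open>The Hahn-Banach theorem\<close>

definition pointed_cone :: "('a::real_vector \<times> real) set \<Rightarrow> bool" where
  "pointed_cone K \<longleftrightarrow> (\<forall>p\<in>K. \<forall>q\<in>K. p + q \<in> K) \<and> (\<forall>p\<in>K. \<forall>\<mu>\<ge>0. \<mu> *\<^sub>R p \<in> K)
     \<and> (\<forall>t. (0, t) \<in> K \<longrightarrow> t \<ge> 0)"

lemma pointed_cone_maximal_extension:
  assumes "pointed_cone K"
  obtains M where "K \<subseteq> M" "pointed_cone M" "\<And>L. pointed_cone L \<Longrightarrow> M \<subseteq> L \<Longrightarrow> L = M"
proof -
  define A where "A = {L. K \<subseteq> L \<and> pointed_cone L}"
  have "\<exists>U\<in>A. \<forall>X\<in>C. X \<subseteq> U" if C: "C \<in> chains A" for C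
  proof (cases "C = {}")
    case True
    then show ?thesis using assms by (auto simp: A_def)
  next
    case False
    have CA: "C \<subseteq> A" and ch: "\<forall>X\<in>C. \<forall>Y\<in>C. X \<subseteq> Y \<or> Y \<subseteq> X"
      using C unfolding chains_def chain_subset_def by auto
    have "p + q \<in> \<Union>C" if pq: "p \<in> \<Union>C" "q \<in> \<Union>C" for p q
    proof -
      obtain X Y where XY: "X \<in> C" "Y \<in> C" "p \<in> X" "q \<in> Y" using pq by blast
      then obtain Z where "Z \<in> C" "p \<in> Z" "q \<in> Z" using ch by blast
      then show ?thesis using CA unfolding A_def pointed_cone_def by blast
    qed
    moreover have "\<mu> *\<^sub>R p \<in> \<Union>C" if "p \<in> \<Union>C" "\<mu> \<ge> 0" for p \<mu>
      using that CA unfolding A_def pointed_cone_def by blast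
    moreover have "t \<ge> 0" if "(0, t) \<in> \<Union>C" for t
      using that CA unfolding A_def pointed_cone_def by blast
    ultimately have "pointed_cone (\<Union>C)"
      unfolding pointed_cone_def by blast
    moreover have "K \<subseteq> \<Union>C" using False CA by (auto simp: A_def)
    ultimately show ?thesis by (auto simp: A_def)
  qed
  then obtain M where "M \<in> A" "\<forall>X\<in>A. M \<subseteq> X \<longrightarrow> X = M" using Zorn_Lemma2 by force
  then show ?thesis using that by (auto simp: A_def)
qed

locale total_pointed_cone =
  fixes M :: "('a::real_vector \<times> real) set"
  assumes pointed: "pointed_cone M"
    and total: "\<And>y. \<exists>t. (y, t) \<in> M"
begin

lemma add_mem: "p \<in> M \<Longrightarrow> q \<in> M \<Longrightarrow> p + q \<in> M"
  and scale_mem: "p \<in> M \<Longrightarrow> \<mu> \<ge> 0 \<Longrightarrow> \<mu> *\<^sub>R p \<in> M"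
  and fiber_zero_nonneg: "(0, t) \<in> M \<Longrightarrow> t \<ge> 0"
  using pointed by (auto simp: pointed_cone_def)

definition level :: "'a \<Rightarrow> real" where
  "level y = Inf {t. (y, t) \<in> M}"

lemma bdd_below_fiber: "bdd_below {t. (y, t) \<in> M}"
proof -
  obtain t0 where t0: "(- y, t0) \<in> M" using total by blast
  have "- t0 \<le> t" if "(y, t) \<in> M" for t
    using fiber_zero_nonneg[of "t + t0"] add_mem[OF that t0] by simp
  then show ?thesis unfolding bdd_below_def by blast
qed

lemma level_le: "(y, t) \<in> M \<Longrightarrow> level y \<le> t"
  unfolding level_def using bdd_below_fiber by (intro cInf_lower) auto

lemma level_greatest: "(\<And>s. (y, s) \<in> M \<Longrightarrow> t \<le> s) \<Longrightarrow> t \<le> level y"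
  unfolding level_def using total by (intro cInf_greatest) auto

lemma level_approx: "e > 0 \<Longrightarrow> \<exists>s. (y, s) \<in> M \<and> s < level y + e"
  using level_greatest[of y "level y + e"] by force

lemma level_subadditive: "level (x + y) \<le> level x + level y"
proof (rule field_le_epsilon)
  fix e :: real assume "e > 0"
  then obtain s1 s2 where "(x, s1) \<in> M" "s1 < level x + e/2" "(y, s2) \<in> M" "s2 < level y + e/2"
    using level_approx[of "e/2"] by (meson half_gt_zero)
  moreover have "level (x + y) \<le> s1 + s2"
    using level_le add_mem[OF calculation(1,3)] by simp
  ultimately show "level (x + y) \<le> level x + level y + e" by simp
qed

lemma level_scale_le: "c > 0 \<Longrightarrow> level (c *\<^sub>R x) \<le> c * level x"
proof -
  assume c: "c > 0"
  have "level (c *\<^sub>R x) / c \<le> s" if "(x, s) \<in> M" for s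
    using level_le[of "c *\<^sub>R x" "c * s"] scale_mem[OF that, of c] c by (simp add: divide_le_eq mult.commute)
  then have "level (c *\<^sub>R x) / c \<le> level x" by (rule level_greatest)
  then show ?thesis using c by (simp add: divide_le_eq mult.commute)
qed

lemma level_pos_homogeneous: "c > 0 \<Longrightarrow> level (c *\<^sub>R x) = c * level x"
  using level_scale_le[of c x] level_scale_le[of "inverse c" "c *\<^sub>R x"]
  by (simp add: field_simps)

lemma level_zero: "level 0 = 0"
proof (rule antisym)
  obtain s where "(0, s) \<in> M" using total by blast
  then show "level 0 \<le> 0" using level_le scale_mem[of _ 0] by fastforce
  show "0 \<le> level 0" using level_greatest fiber_zero_nonneg by blast
qed

text \<open>The one-dimensional extension step: adjoining the ray through \<open>(y, - level (- y))\<close>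
  keeps \<open>M\<close> pointed, so for maximal \<open>M\<close> it forces \<open>level y \<le> - level (- y)\<close>.\<close>

lemma pointed_cone_adjoin_ray:
  "pointed_cone {(k + \<mu> *\<^sub>R y, t + \<mu> * c) | k t \<mu>. (k, t) \<in> M \<and> \<mu> \<ge> 0}"
    (is "pointed_cone ?L") if c: "c = - level (- y)"
proof -
  have mem: "(k + m *\<^sub>R y, t + m * c) \<in> ?L" if "(k, t) \<in> M" "m \<ge> 0" for k t m
    using that by blast
  have "p + q \<in> ?L" if pq: "p \<in> ?L" "q \<in> ?L" for p q
  proof -
    obtain k1 t1 m1 k2 t2 m2 where "(k1, t1) \<in> M" "m1 \<ge> 0" "p = (k1 + m1 *\<^sub>R y, t1 + m1 * c)"
      "(k2, t2) \<in> M" "m2 \<ge> 0" "q = (k2 + m2 *\<^sub>R y, t2 + m2 * c)" using pq by blast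
    moreover have "(k1 + k2, t1 + t2) \<in> M" using add_mem calculation by fastforce
    ultimately show ?thesis using mem[of "k1 + k2" "t1 + t2" "m1 + m2"]
      by (simp add: algebra_simps scaleR_add_left)
  qed
  moreover have "\<nu> *\<^sub>R p \<in> ?L" if p: "p \<in> ?L" and "\<nu> \<ge> 0" for p \<nu>
  proof -
    obtain k t m where "(k, t) \<in> M" "m \<ge> 0" "p = (k + m *\<^sub>R y, t + m * c)" using p by blast
    moreover have "(\<nu> *\<^sub>R k, \<nu> * t) \<in> M" using scale_mem calculation \<open>\<nu> \<ge> 0\<close> by fastforce
    ultimately show ?thesis using mem[of "\<nu> *\<^sub>R k" "\<nu> * t" "\<nu> * m"] \<open>\<nu> \<ge> 0\<close>
      by (simp add: algebra_simps scaleR_add_right)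
  qed
  moreover have "s \<ge> 0" if s: "(0, s) \<in> ?L" for s
  proof -
    obtain k t m where km: "(k, t) \<in> M" "m \<ge> 0" "k + m *\<^sub>R y = 0" "s = t + m * c"
      using s by auto
    then have k: "k = (m *\<^sub>R - y)" by (simp add: eq_neg_iff_add_eq_0)
    show ?thesis
    proof (cases "m = 0")
      case True
      then show ?thesis using km fiber_zero_nonneg by auto
    next
      case False
      then have "m * level (- y) \<le> t"
        using km k level_le level_pos_homogeneous[of m "- y"] by fastforce
      then show ?thesis using km c by simp
    qed
  qed
  ultimately show ?thesis unfolding pointed_cone_def by blast
qed

lemma linear_level_if_maximal:
  assumes maximal: "\<And>L. pointed_cone L \<Longrightarrow> M \<subseteq> L \<Longrightarrow> L = M"
  shows "linear level"
proof -
  have level_neg_le: "level y + level (- y) \<le> 0" for y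
  proof -
    define L where "L = {(k + \<mu> *\<^sub>R y, t + \<mu> * - level (- y)) | k t \<mu>. (k, t) \<in> M \<and> \<mu> \<ge> 0}"
    have "M \<subseteq> L" unfolding L_def by force
    then have "L = M" using maximal pointed_cone_adjoin_ray[of "- level (- y)" y] by (simp add: L_def)
    moreover have "(0, 0) \<in> M" using total scale_mem[of _ 0] by fastforce
    then have "(y, - level (- y)) \<in> L" unfolding L_def by force
    ultimately show ?thesis using level_le by fastforce
  qed
  have level_neg: "level (- y) = - level y" for y
    using level_neg_le[of y] level_subadditive[of y "- y"] level_zero by simp
  have "level (x + y) = level x + level y" for x y
    using level_subadditive[of x y] level_subadditive[of "x + y" "- y"] level_neg[of y] by simp
  moreover have "level (c *\<^sub>R x) = c * level x" for c x
  proof -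
    consider "c > 0" | "c = 0" | "c < 0" by linarith
    then show ?thesis
      using level_pos_homogeneous[of c x] level_pos_homogeneous[of "- c" x] level_zero
        level_neg[of "(- c) *\<^sub>R x"] by cases auto
  qed
  ultimately show ?thesis by (intro linearI) simp_all
qed

end

lemma hahn_banach_cone:
  assumes "pointed_cone K" and total: "\<And>y. \<exists>t. (y, t) \<in> K"
  obtains h where "linear h" "\<And>y t. (y, t) \<in> K \<Longrightarrow> h y \<le> t"
proof -
  obtain M where "K \<subseteq> M" "pointed_cone M" "\<And>L. pointed_cone L \<Longrightarrow> M \<subseteq> L \<Longrightarrow> L = M"
    using pointed_cone_maximal_extension[OF assms(1)] by blast
  moreover have "total_pointed_cone M"
    by unfold_locales (use calculation total in blast)+
  ultimately show ?thesis
    using that[OF total_pointed_cone.linear_level_if_maximal total_pointed_cone.level_le] by blast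
qed

lemma blinfun_apply_le_norm: "blinfun_apply f x \<le> norm f * norm x"
  using norm_blinfun[of f x] by simp

definition constraint_cone :: "real \<Rightarrow> 'a::real_normed_vector set \<Rightarrow> ('a \<Rightarrow> real) \<Rightarrow> ('a \<times> real) set" where
  "constraint_cone c D \<phi> = {(y, t). \<exists>s\<ge>0. \<exists>d\<in>D. c * norm (y - s *\<^sub>R d) + s * \<phi> d \<le> t}"

lemma constraint_coneI:
  "s \<ge> 0 \<Longrightarrow> d \<in> D \<Longrightarrow> c * norm (y - s *\<^sub>R d) + s * \<phi> d \<le> t \<Longrightarrow> (y, t) \<in> constraint_cone c D \<phi>"
  unfolding constraint_cone_def by blast

lemma constraint_cone_add:
  assumes convex: "convex_on D \<phi>" and "c \<ge> 0"
    and "p \<in> constraint_cone c D \<phi>" "q \<in> constraint_cone c D \<phi>"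
  shows "p + q \<in> constraint_cone c D \<phi>"
proof -
  obtain y1 t1 s1 d1 y2 t2 s2 d2 where pq: "p = (y1, t1)" "q = (y2, t2)" "s1 \<ge> 0" "s2 \<ge> 0"
    "d1 \<in> D" "d2 \<in> D" "c * norm (y1 - s1 *\<^sub>R d1) + s1 * \<phi> d1 \<le> t1"
    "c * norm (y2 - s2 *\<^sub>R d2) + s2 * \<phi> d2 \<le> t2"
    using assms(3,4) unfolding constraint_cone_def by auto
  have "norm ((y1 + y2) - (s1 *\<^sub>R d1 + s2 *\<^sub>R d2)) \<le> norm (y1 - s1 *\<^sub>R d1) + norm (y2 - s2 *\<^sub>R d2)"
    by (metis add_diff_add norm_triangle_ineq)
  then have tri: "c * norm ((y1 + y2) - (s1 *\<^sub>R d1 + s2 *\<^sub>R d2))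
      \<le> c * norm (y1 - s1 *\<^sub>R d1) + c * norm (y2 - s2 *\<^sub>R d2)"
    using \<open>c \<ge> 0\<close> by (metis distrib_left mult_left_mono)
  show ?thesis
  proof (cases "s1 + s2 = 0")
    case True
    then have "s1 = 0" "s2 = 0" using pq by auto
    then show ?thesis using pq tri constraint_coneI[of 0 d1 D c "y1 + y2" \<phi> "t1 + t2"] by simp
  next
    case False
    define u where "u = s1 / (s1 + s2)"
    define d where "d = u *\<^sub>R d1 + (1 - u) *\<^sub>R d2"
    have s: "s1 + s2 > 0" and u: "0 \<le> u" "u \<le> 1" using pq False by (auto simp: u_def)
    have "d \<in> D" using convex pq u by (auto simp: d_def convex_on_def convex_def)
    have us: "(s1 + s2) * u = s1" "(s1 + s2) * (1 - u) = s2" using s by (simp_all add: u_def field_simps)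
    then have sd: "(s1 + s2) *\<^sub>R d = s1 *\<^sub>R d1 + s2 *\<^sub>R d2"
      by (simp add: d_def scaleR_add_right)
    have "(s1 + s2) * \<phi> d \<le> (s1 + s2) * (u * \<phi> d1 + (1 - u) * \<phi> d2)"
      using convex pq u s by (intro mult_left_mono) (auto simp: d_def convex_on_def)
    also have "\<dots> = ((s1 + s2) * u) * \<phi> d1 + ((s1 + s2) * (1 - u)) * \<phi> d2"
      by (simp only: distrib_left mult.assoc)
    also have "\<dots> = s1 * \<phi> d1 + s2 * \<phi> d2"
      unfolding us ..
    finally have "c * norm ((y1 + y2) - (s1 + s2) *\<^sub>R d) + (s1 + s2) * \<phi> d \<le> t1 + t2"
      using pq tri unfolding sd by linarith
    then show ?thesis using constraint_coneI[of "s1 + s2" d] s \<open>d \<in> D\<close> pq by simp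
  qed
qed

lemma pointed_cone_constraint_cone:
  assumes "convex_on D \<phi>" and "c \<ge> 0" and above: "\<And>d. d \<in> D \<Longrightarrow> - c * norm d \<le> \<phi> d"
  shows "pointed_cone (constraint_cone c D \<phi>)"
proof -
  have "\<mu> *\<^sub>R p \<in> constraint_cone c D \<phi>" if p_K: "p \<in> constraint_cone c D \<phi>" and "\<mu> \<ge> 0" for p \<mu>
  proof -
    obtain y t s d where p: "p = (y, t)" "s \<ge> 0" "d \<in> D" "c * norm (y - s *\<^sub>R d) + s * \<phi> d \<le> t"
      using p_K unfolding constraint_cone_def by blast
    have "\<mu> *\<^sub>R y - (\<mu> * s) *\<^sub>R d = \<mu> *\<^sub>R (y - s *\<^sub>R d)"
      by (simp add: scaleR_diff_right)
    then have "norm (\<mu> *\<^sub>R y - (\<mu> * s) *\<^sub>R d) = \<mu> * norm (y - s *\<^sub>R d)"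
      using \<open>\<mu> \<ge> 0\<close> by simp
    then have "c * norm (\<mu> *\<^sub>R y - (\<mu> * s) *\<^sub>R d) + (\<mu> * s) * \<phi> d
        = \<mu> * (c * norm (y - s *\<^sub>R d) + s * \<phi> d)"
      by (simp add: algebra_simps)
    also have "\<dots> \<le> \<mu> * t" using p(4) \<open>\<mu> \<ge> 0\<close> by (rule mult_left_mono)
    finally show ?thesis using constraint_coneI[of "\<mu> * s" d] p \<open>\<mu> \<ge> 0\<close> by simp
  qed
  moreover have "t \<ge> 0" if zero_K: "(0, t) \<in> constraint_cone c D \<phi>" for t
  proof -
    obtain s d where "s \<ge> 0" "d \<in> D" "c * norm (0 - s *\<^sub>R d) + s * \<phi> d \<le> t"
      using zero_K unfolding constraint_cone_def by blast
    then show ?thesis using mult_left_mono[OF above[of d], of s] by (simp add: algebra_simps)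
  qed
  ultimately show ?thesis
    using constraint_cone_add[OF assms(1,2)] unfolding pointed_cone_def by blast
qed

lemma hahn_banach_convex_constraint:
  fixes D :: "'a::real_normed_vector set" and \<phi> :: "'a \<Rightarrow> real"
  assumes "convex_on D \<phi>" and "D \<noteq> {}" and "c \<ge> 0"
    and "\<And>d. d \<in> D \<Longrightarrow> - c * norm d \<le> \<phi> d"
  obtains f :: "'a \<Rightarrow>\<^sub>L real" where "norm f \<le> c" "\<And>d. d \<in> D \<Longrightarrow> blinfun_apply f d \<le> \<phi> d"
proof -
  obtain d0 where "d0 \<in> D" using \<open>D \<noteq> {}\<close> by blast
  then have norm_in_K: "(y, c * norm y) \<in> constraint_cone c D \<phi>" for y
    using constraint_coneI[of 0 d0] by simp
  then obtain h where h: "linear h" "\<And>y t. (y, t) \<in> constraint_cone c D \<phi> \<Longrightarrow> h y \<le> t"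
    using hahn_banach_cone[OF pointed_cone_constraint_cone[OF assms(1,3,4)]] by blast
  have h_abs: "\<bar>h y\<bar> \<le> c * norm y" for y
    using h(2)[OF norm_in_K[of y]] h(2)[OF norm_in_K[of "- y"]] linear_neg[OF h(1), of y] by simp
  have "bounded_linear h"
    using h(1) h_abs by (intro bounded_linear_intro[where K=c]) (auto simp: linear_add linear_scale mult.commute)
  then have apply_h: "blinfun_apply (Blinfun h) = h" by (rule bounded_linear_Blinfun_apply)
  have "norm (Blinfun h) \<le> c"
    using h_abs \<open>c \<ge> 0\<close> by (intro norm_blinfun_bound) (auto simp: apply_h mult.commute)
  moreover have "h d \<le> \<phi> d" if "d \<in> D" for d
    using h(2) constraint_coneI[of 1 d D c d \<phi> "\<phi> d"] that by simp
  ultimately show ?thesis using that apply_h by auto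
qed

lemma norming_functional:
  fixes x :: "'a::real_normed_vector"
  obtains f :: "'a dual" where "norm f \<le> 1" "blinfun_apply f x = norm x"
proof -
  have "convex_on {- x} (\<lambda>_. - norm x)" by (simp add: convex_on_const)
  then obtain f :: "'a dual" where f: "norm f \<le> 1" "blinfun_apply f (- x) \<le> - norm x"
    using hahn_banach_convex_constraint[of "{- x}" "\<lambda>_. - norm x" 1] by auto
  moreover have "blinfun_apply f x \<le> norm x"
    using blinfun_apply_le_norm[of f x] mult_right_mono[OF f(1), of "norm x"] by simp
  ultimately show ?thesis using that by (simp add: blinfun.minus_right)
qed

lemma canon_apply [simp]: "blinfun_apply (canon x) f = blinfun_apply f x"
  unfolding canon_def by (subst bounded_linear_Blinfun_apply) auto

lemma norm_canon [simp]: "norm (canon x) = norm x"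
proof (rule antisym)
  show "norm (canon x) \<le> norm x"
  proof (rule norm_blinfun_bound)
    show "norm (blinfun_apply (canon x) f) \<le> norm x * norm f" for f :: "'a dual"
      using norm_blinfun[of f x] by (simp add: mult.commute)
  qed simp
  obtain f :: "'a dual" where f: "norm f \<le> 1" "blinfun_apply f x = norm x"
    using norming_functional by blast
  then have "norm x \<le> norm (canon x) * norm f" using blinfun_apply_le_norm[of "canon x" f] by simp
  also have "\<dots> \<le> norm (canon x)" using f(1) by (simp add: mult_left_le)
  finally show "norm x \<le> norm (canon x)" .
qed

lemma bounded_linear_canon: "bounded_linear canon"
  by (rule bounded_linear_intro[where K=1]) (auto intro: blinfun_eqI simp: blinfun.bilinear_simps)

lemma linear_canon: "linear canon"
  by (rule bounded_linear.linear[OF bounded_linear_canon])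

lemmas canon_add = linear_add[OF linear_canon]
  and canon_scaleR = linear_scale[OF linear_canon]
  and canon_zero [simp] = linear_0[OF linear_canon]

lemma closed_range_canon: "closed (range (canon :: 'a::banach \<Rightarrow> 'a dual dual))"
  by (rule complete_imp_closed, rule complete_isometric_image[where e=1])
    (auto simp: bounded_linear_canon complete_UNIV)

section \<open>Ekeland's variational principle and the Bishop-Phelps theorem\<close>

definition ekeland_drop :: "real \<Rightarrow> ('a::metric_space \<Rightarrow> real) \<Rightarrow> 'a set \<Rightarrow> 'a \<Rightarrow> 'a set" where
  "ekeland_drop \<eta> f C x = {y \<in> C. \<eta> * dist y x + f x \<le> f y}"

lemma ekeland_drop_refl: "x \<in> C \<Longrightarrow> x \<in> ekeland_drop \<eta> f C x"
  by (simp add: ekeland_drop_def)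

lemma ekeland_drop_trans:
  assumes "\<eta> > 0" "y \<in> ekeland_drop \<eta> f C x" "z \<in> ekeland_drop \<eta> f C y"
  shows "z \<in> ekeland_drop \<eta> f C x"
proof -
  have "\<eta> * dist z x \<le> \<eta> * dist z y + \<eta> * dist y x"
    using dist_triangle[of z x y] \<open>\<eta> > 0\<close> by (simp flip: distrib_left)
  then show ?thesis using assms(2,3) by (simp add: ekeland_drop_def)
qed

lemma closed_ekeland_drop: "closed C \<Longrightarrow> continuous_on C f \<Longrightarrow> closed (ekeland_drop \<eta> f C x)"
  unfolding ekeland_drop_def by (intro continuous_on_closed_Collect_le continuous_intros) auto

lemma ekeland_drop_sequence:
  assumes "x0 \<in> C" and bdd: "bdd_above (f ` C)" and "\<eta> > 0"
  obtains xs where "\<And>n. xs n \<in> C" "\<And>n. xs (Suc n) \<in> ekeland_drop \<eta> f C (xs n)"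
    "\<And>n y. y \<in> ekeland_drop \<eta> f C (xs (Suc n)) \<Longrightarrow> \<eta> * dist y (xs (Suc n)) < 1 / Suc n"
proof -
  let ?S = "ekeland_drop \<eta> f C"
  define next_pt where "next_pt n x = (SOME y. y \<in> ?S x \<and> Sup (f ` ?S x) - 1 / Suc n < f y)" for n x
  have next_pt: "next_pt n x \<in> ?S x \<and> Sup (f ` ?S x) - 1 / Suc n < f (next_pt n x)" if "x \<in> C" for n x
  proof -
    have "\<exists>y\<in>?S x. Sup (f ` ?S x) - 1 / Suc n < f y"
      using less_cSupD[of "f ` ?S x" "Sup (f ` ?S x) - 1 / Suc n"] ekeland_drop_refl[OF that] by force
    then show ?thesis unfolding next_pt_def by (rule someI2_bex) auto
  qed
  define xs where "xs n = rec_nat x0 next_pt n" for n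
  have xs_Suc: "xs (Suc n) = next_pt n (xs n)" for n
    by (simp add: xs_def)
  have xs_C: "xs n \<in> C" for n
    by (induction n) (use \<open>x0 \<in> C\<close> next_pt in \<open>auto simp: xs_def ekeland_drop_def\<close>)
  have xs_step: "xs (Suc n) \<in> ?S (xs n)" for n
    using next_pt[OF xs_C] by (simp add: xs_Suc)
  have "\<eta> * dist y (xs (Suc n)) < 1 / Suc n" if "y \<in> ?S (xs (Suc n))" for y n
  proof -
    have "y \<in> ?S (xs n)" using that ekeland_drop_trans[OF \<open>\<eta> > 0\<close> xs_step] by blast
    then have "f y \<le> Sup (f ` ?S (xs n))"
      using bdd by (intro cSup_upper) (auto simp: ekeland_drop_def intro: bdd_above_mono)
    moreover have "Sup (f ` ?S (xs n)) - 1 / Suc n < f (xs (Suc n))"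
      using next_pt[OF xs_C[of n], of n] by (simp add: xs_Suc)
    moreover have "\<eta> * dist y (xs (Suc n)) + f (xs (Suc n)) \<le> f y"
      using that by (simp add: ekeland_drop_def)
    ultimately show ?thesis by linarith
  qed
  then show ?thesis using that xs_C xs_step by blast
qed

lemma ekeland_variational_principle:
  fixes f :: "'a::complete_space \<Rightarrow> real"
  assumes C: "closed C" "x0 \<in> C" and f: "continuous_on C f" "bdd_above (f ` C)" and "\<eta> > 0"
  obtains a where "a \<in> C" "\<And>x. x \<in> C \<Longrightarrow> f x \<le> f a + \<eta> * dist x a"
proof -
  let ?S = "ekeland_drop \<eta> f C"
  obtain xs where xs_C: "\<And>n. xs n \<in> C" and xs_step: "\<And>n. xs (Suc n) \<in> ?S (xs n)"
    and small: "\<And>n y. y \<in> ?S (xs (Suc n)) \<Longrightarrow> \<eta> * dist y (xs (Suc n)) < 1 / Suc n"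
    using ekeland_drop_sequence[OF C(2) f(2) \<open>\<eta> > 0\<close>] by blast
  define T where "T n = ?S (xs (Suc n))" for n
  have T_mono: "T n \<subseteq> T m" if "m \<le> n" for m n
    using lift_Suc_antimono_le[of T, OF _ that] ekeland_drop_trans[OF \<open>\<eta> > 0\<close> xs_step]
    unfolding T_def by blast
  have T_diam: "\<exists>N. \<forall>y\<in>T N. \<forall>z\<in>T N. dist y z < e" if "e > 0" for e
  proof -
    obtain N :: nat where "2 / (\<eta> * e) < N" using reals_Archimedean2 by blast
    then have N: "2 / (\<eta> * e) < Suc N" by simp
    have "dist y z < e" if "y \<in> T N" "z \<in> T N" for y z
    proof -
      have "\<eta> * dist y z \<le> \<eta> * dist y (xs (Suc N)) + \<eta> * dist z (xs (Suc N))"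
        using dist_triangle3[of y z "xs (Suc N)"] \<open>\<eta> > 0\<close> by (simp add: dist_commute flip: distrib_left)
      also have "\<dots> < 2 / Suc N"
        using small[of y N] small[of z N] that unfolding T_def by simp
      also have "\<dots> < \<eta> * e"
        using N \<open>\<eta> > 0\<close> \<open>e > 0\<close> by (simp add: field_simps)
      finally show ?thesis using \<open>\<eta> > 0\<close> by simp
    qed
    then show ?thesis by blast
  qed
  have "T n \<noteq> {}" for n
    using ekeland_drop_refl[OF xs_C] by (auto simp: T_def)
  then obtain a where a: "\<Inter> (range T) = {a}"
    using decreasing_closed_nest_sing[of T, OF _ _ T_mono T_diam] closed_ekeland_drop[OF C(1) f(1)]
    unfolding T_def by blast
  have a_T: "a \<in> T n" for n
  proof -
    have "a \<in> \<Inter> (range T)" using a by simp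
    then show ?thesis by blast
  qed
  then have "a \<in> C" by (simp add: T_def ekeland_drop_def)
  moreover have "f x \<le> f a + \<eta> * dist x a" if "x \<in> C" for x
  proof (rule ccontr)
    assume gt: "\<not> f x \<le> f a + \<eta> * dist x a"
    then have "x \<in> ?S a" using that by (simp add: ekeland_drop_def)
    then have "x \<in> T n" for n using ekeland_drop_trans[OF \<open>\<eta> > 0\<close>] a_T unfolding T_def by blast
    then have "x = a" using a by blast
    then show False using gt \<open>\<eta> > 0\<close> by simp
  qed
  ultimately show ?thesis using that by blast
qed

lemma norm_blinfun_approx:
  fixes f :: "'b::real_normed_vector \<Rightarrow>\<^sub>L real"
  assumes "e > 0"
  obtains u where "norm u \<le> 1" "norm f - e \<le> blinfun_apply f u"
proof (rule ccontr)
  assume "\<not> thesis"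
  then have lt: "\<And>u. norm u \<le> 1 \<Longrightarrow> blinfun_apply f u < norm f - e"
    using that by (meson not_le)
  have "norm f \<le> norm f - e"
  proof (rule norm_blinfun_bound)
    show "norm f - e \<ge> 0" using lt[of 0] by simp
    show "norm (blinfun_apply f x) \<le> (norm f - e) * norm x" for x
    proof (cases "x = 0")
      case False
      have "\<bar>blinfun_apply f ((1 / norm x) *\<^sub>R x)\<bar> < norm f - e"
        using lt[of "(1 / norm x) *\<^sub>R x"] lt[of "- ((1 / norm x) *\<^sub>R x)"] False
        by (simp add: blinfun.minus_right abs_less_iff)
      then have "\<bar>blinfun_apply f x\<bar> < (norm f - e) * norm x"
        using False by (simp add: blinfun.scaleR_right abs_mult field_simps)
      then show ?thesis by simp
    qed simp
  qed
  then show False using \<open>e > 0\<close> by simp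
qed

lemma norm_blinfun_approx_sphere:
  fixes f :: "'b::real_normed_vector \<Rightarrow>\<^sub>L real" and z :: 'b
  assumes "norm z = 1" and "e > 0"
  obtains u where "norm u = 1" "norm f - e \<le> blinfun_apply f u"
proof -
  obtain u where u: "norm u \<le> 1" "norm f - e \<le> blinfun_apply f u"
    using norm_blinfun_approx[OF \<open>e > 0\<close>] by blast
  show ?thesis
  proof (cases "blinfun_apply f u > 0")
    case True
    then have "norm u > 0" by (cases "u = 0") auto
    moreover have "blinfun_apply f u \<le> blinfun_apply f u / norm u"
      using True u(1) calculation by (simp add: le_divide_eq mult_left_le)
    ultimately show ?thesis
      using that[of "(1 / norm u) *\<^sub>R u"] u(2) by (simp add: blinfun.scaleR_right)
  next
    case False
    then have "norm f - e \<le> blinfun_apply f z \<or> norm f - e \<le> blinfun_apply f (- z)"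
      using u(2) by (auto simp: blinfun.minus_right)
    then show ?thesis using that assms(1) by (metis norm_minus_cancel)
  qed
qed

lemma pair_cauchy_schwarz:
  fixes a b c d :: real
  shows "a * b + c * d \<le> sqrt (a\<^sup>2 + c\<^sup>2) * sqrt (b\<^sup>2 + d\<^sup>2)"
  using norm_cauchy_schwarz[of "(a, c)" "(b, d)"] by (simp add: norm_Pair)

lemma norm_pair_blinfun_approx:
  fixes f :: "'b::real_normed_vector \<Rightarrow>\<^sub>L real" and g :: "'c::real_normed_vector \<Rightarrow>\<^sub>L real"
  assumes "e > 0"
  obtains u w where "norm (u, w) \<le> 1" "norm (f, g) - e \<le> blinfun_apply f u + blinfun_apply g w"
proof (cases "norm (f, g) = 0")
  case True
  then show ?thesis using that[of 0 0] \<open>e > 0\<close> by simp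
next
  case False
  define R where "R = norm (f, g)"
  have R: "R > 0" "R\<^sup>2 = (norm f)\<^sup>2 + (norm g)\<^sup>2"
    using False norm_ge_zero[of "(f, g)"] unfolding R_def by linarith (simp add: norm_Pair)
  obtain u1 where u1: "norm u1 \<le> 1" "norm f - e/2 \<le> blinfun_apply f u1"
    using norm_blinfun_approx[of "e/2"] \<open>e > 0\<close> by auto
  obtain w1 where w1: "norm w1 \<le> 1" "norm g - e/2 \<le> blinfun_apply g w1"
    using norm_blinfun_approx[of "e/2"] \<open>e > 0\<close> by auto
  define u where "u = (norm f / R) *\<^sub>R u1"
  define w where "w = (norm g / R) *\<^sub>R w1"
  have "norm u \<le> norm f / R" "norm w \<le> norm g / R"
    using u1(1) w1(1) R(1) by (simp_all add: u_def w_def divide_right_mono mult_left_le)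
  then have "(norm (u, w))\<^sup>2 \<le> (norm f / R)\<^sup>2 + (norm g / R)\<^sup>2"
    by (simp add: norm_Pair add_mono power_mono)
  also have "\<dots> = ((norm f)\<^sup>2 + (norm g)\<^sup>2) / R\<^sup>2" by (simp add: power_divide add_divide_distrib)
  also have "\<dots> = 1" using R(1) unfolding R(2)[symmetric] by simp
  finally have "norm (u, w) \<le> 1" by (simp add: power_le_one_iff)
  have "norm f + norm g \<le> 2 * R"
    using norm_fst_le[of f g] norm_snd_le[of g f] unfolding R_def by simp
  then have "R - e \<le> R - e/2 * ((norm f + norm g) / R)"
    using R(1) \<open>e > 0\<close> by (simp add: divide_le_eq)
  also have "\<dots> = (norm f / R) * (norm f - e/2) + (norm g / R) * (norm g - e/2)"
    using R by (simp add: field_simps power2_eq_square)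
  also have "\<dots> \<le> blinfun_apply f u + blinfun_apply g w"
    unfolding u_def w_def blinfun.scaleR_right real_scaleR_def
    using u1(2) w1(2) R(1) by (intro add_mono mult_left_mono) auto
  finally show ?thesis using that \<open>norm (u, w) \<le> 1\<close> R_def by blast
qed

lemma bishop_phelps:
  fixes f :: "'a::banach dual"
  assumes "\<eta> > 0"
  obtains g :: "'a dual" and x0 where "norm (g - f) \<le> \<eta>" "norm x0 \<le> 1"
    "\<And>x. norm x \<le> 1 \<Longrightarrow> blinfun_apply g x \<le> blinfun_apply g x0"
proof -
  have "bdd_above (blinfun_apply f ` cball 0 1)"
    using blinfun_apply_le_norm[of f] by (intro bdd_aboveI[of _ "norm f"]) (force intro: order_trans mult_left_le)
  moreover have "continuous_on (cball 0 1) (blinfun_apply f)" by (intro continuous_intros)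
  ultimately obtain x0 where x0: "x0 \<in> cball 0 1"
    and max: "\<And>x. x \<in> cball 0 1 \<Longrightarrow> blinfun_apply f x \<le> blinfun_apply f x0 + \<eta> * dist x x0"
    using ekeland_variational_principle[of "cball 0 1" 0 "blinfun_apply f" \<eta>] \<open>\<eta> > 0\<close> by auto
  define D where "D = (\<lambda>x. x - x0) ` cball 0 1"
  have "convex_on D (\<lambda>d. - blinfun_apply f d)"
    unfolding D_def by (rule convex_onI) (auto simp: convex_translation blinfun.bilinear_simps algebra_simps)
  moreover have "- \<eta> * norm d \<le> - blinfun_apply f d" if "d \<in> D" for d
  proof -
    obtain x where "norm x \<le> 1" "d = x - x0" using \<open>d \<in> D\<close> by (auto simp: D_def)
    then show ?thesis using max[of x] by (simp add: dist_norm blinfun.diff_right)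
  qed
  moreover have "D \<noteq> {}" by (simp add: D_def)
  ultimately obtain H :: "'a dual" where H: "norm H \<le> \<eta>" "\<And>d. d \<in> D \<Longrightarrow> blinfun_apply H d \<le> - blinfun_apply f d"
    using hahn_banach_convex_constraint[of D _ \<eta>] \<open>\<eta> > 0\<close> by (metis less_imp_le)
  have "blinfun_apply (f + H) x \<le> blinfun_apply (f + H) x0" if "norm x \<le> 1" for x
    using H(2)[of "x - x0"] that by (auto simp: D_def blinfun.bilinear_simps)
  then show ?thesis using that[of "f + H" x0] H(1) x0 by simp
qed

lemma norm_blinfun_attained:
  assumes "norm x0 \<le> 1" "\<And>x. norm x \<le> 1 \<Longrightarrow> blinfun_apply f x \<le> blinfun_apply f x0"
  shows "blinfun_apply f x0 = norm f"
proof (rule antisym)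
  show "blinfun_apply f x0 \<le> norm f"
    using blinfun_apply_le_norm[of f x0] assms(1) by (meson mult_left_le norm_ge_zero order_trans)
  show "norm f \<le> blinfun_apply f x0"
  proof (rule field_le_epsilon)
    fix e :: real assume "e > 0"
    then obtain u where "norm u \<le> 1" "norm f - e \<le> blinfun_apply f u"
      using norm_blinfun_approx by blast
    then show "norm f \<le> blinfun_apply f x0 + e" using assms(2)[of u] by simp
  qed
qed

lemma bishop_phelps_normalized:
  fixes f :: "'a::banach dual"
  assumes "norm f = 1" and "\<eta> > 0" "\<eta> \<le> 1/2"
  obtains a x0 where "norm a = 1" "norm x0 = 1" "blinfun_apply a x0 = 1" "norm (a - f) \<le> 2 * \<eta>"
proof -
  obtain g x0 where g: "norm (g - f) \<le> \<eta>" and x0: "norm x0 \<le> 1"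
    and max: "\<And>x. norm x \<le> 1 \<Longrightarrow> blinfun_apply g x \<le> blinfun_apply g x0"
    using bishop_phelps[OF \<open>\<eta> > 0\<close>] by blast
  have gx0: "blinfun_apply g x0 = norm g" using norm_blinfun_attained[OF x0 max] .
  have ng: "\<bar>norm g - 1\<bar> \<le> \<eta>"
    using norm_triangle_ineq3[of g f] g assms(1) by simp
  then have "norm g > 0" using \<open>\<eta> \<le> 1/2\<close> by linarith
  have "norm x0 = 1"
    using gx0 blinfun_apply_le_norm[of g x0] x0 \<open>norm g > 0\<close> by simp
  define a where "a = (1 / norm g) *\<^sub>R g"
  have "a - g = (1 / norm g - 1) *\<^sub>R g" by (simp add: a_def scaleR_diff_left)
  then have "norm (a - g) = \<bar>(1 / norm g - 1) * norm g\<bar>" by (simp add: abs_mult)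
  also have "\<dots> = \<bar>1 - norm g\<bar>" using \<open>norm g > 0\<close> by (simp add: left_diff_distrib)
  finally have "norm (a - g) \<le> \<eta>" using ng by (simp add: abs_minus_commute)
  then have "norm (a - f) \<le> 2 * \<eta>"
    using norm_triangle_ineq[of "a - g" "g - f"] g by simp
  moreover have "norm a = 1" "blinfun_apply a x0 = 1"
    using \<open>norm g > 0\<close> gx0 by (simp_all add: a_def blinfun.scaleR_left)
  ultimately show ?thesis using that \<open>norm x0 = 1\<close> by blast
qed

lemma norm_attaining_functional_near:
  fixes V :: "'a::banach dual dual"
  assumes "x1 \<noteq> (0::'a)" and "\<delta> > 0"
  obtains a x0 where "norm a = 1" "norm x0 = 1" "blinfun_apply a x0 = 1"
    "norm V - \<delta> \<le> blinfun_apply V a"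
proof -
  obtain f1 :: "'a dual" where f1: "norm f1 \<le> 1" "blinfun_apply f1 x1 = norm x1"
    using norming_functional by blast
  then have "norm f1 = 1"
    using blinfun_apply_le_norm[of f1 x1] \<open>x1 \<noteq> 0\<close> by simp
  then obtain f0 where f0: "norm f0 = 1" "norm V - \<delta>/2 \<le> blinfun_apply V f0"
    using norm_blinfun_approx_sphere[of f1 "\<delta>/2" V] \<open>\<delta> > 0\<close> by auto
  define \<eta> where "\<eta> = min (1/2) (\<delta> / (4 * (norm V + 1)))"
  have "\<delta> / (4 * (norm V + 1)) > 0" using \<open>\<delta> > 0\<close> by (simp add: add_nonneg_pos)
  then have \<eta>: "\<eta> > 0" "\<eta> \<le> 1/2" unfolding \<eta>_def by (simp, linarith)
  have "\<eta> * (4 * (norm V + 1)) \<le> \<delta>"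
    unfolding \<eta>_def by (smt (verit) min.cobounded2 norm_ge_zero pos_le_divide_eq)
  then have \<eta>_V: "4 * \<eta> * norm V \<le> \<delta>"
    using \<eta>(1) by (simp add: algebra_simps)
  obtain a x0 where a: "norm a = 1" "norm x0 = 1" "blinfun_apply a x0 = 1" "norm (a - f0) \<le> 2 * \<eta>"
    using bishop_phelps_normalized[OF f0(1) \<eta>] by blast
  then have "blinfun_apply V (f0 - a) \<le> norm V * (2 * \<eta>)"
    using blinfun_apply_le_norm[of V "f0 - a"] by (metis norm_ge_zero norm_minus_commute mult_left_mono order_trans)
  then have "norm V - \<delta> \<le> blinfun_apply V a"
    using f0(2) \<eta>_V by (simp add: blinfun.diff_right algebra_simps)
  then show ?thesis using that a by blast
qed

section \<open>The function h and the operator T\<close>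

lemma ext_closed_norm_on:
  assumes "closed D" and "continuous_on UNIV L"
  shows "ext_closed (\<lambda>w. if w \<in> D then ereal (norm (L w)) else \<infinity>)"
proof -
  have "(if w \<in> D then ereal (norm (L w)) else \<infinity>) \<le> ereal t \<longleftrightarrow> w \<in> D \<and> norm (L w) \<le> t" for w t
    by simp
  then have "{(w, t). (if w \<in> D then ereal (norm (L w)) else \<infinity>) \<le> ereal t}
      = (D \<times> UNIV) \<inter> {z. norm (L (fst z)) \<le> snd z}"
    by auto
  moreover have "continuous_on UNIV (\<lambda>z :: _ \<times> real. L (fst z))"
    using continuous_on_compose2[OF assms(2) continuous_on_fst[OF continuous_on_id]] by simp
  then have "closed {z. norm (L (fst z)) \<le> snd z}"
    by (intro closed_Collect_le continuous_intros)
  ultimately show ?thesis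
    unfolding ext_closed_def using assms(1) by (simp add: closed_Int closed_Times)
qed

lemma ext_convex_norm_on:
  assumes "convex D" and "linear L"
  shows "ext_convex (\<lambda>w. if w \<in> D then ereal (norm (L w)) else \<infinity>)"
proof -
  have "(if w \<in> D then ereal (norm (L w)) else \<infinity>) \<le> ereal t \<longleftrightarrow> w \<in> D \<and> norm (L w) \<le> t" for w t
    by simp
  then have "{(w, t). (if w \<in> D then ereal (norm (L w)) else \<infinity>) \<le> ereal t}
      = {(w, t). w \<in> D \<and> norm (L w) \<le> t}"
    by auto
  moreover have "convex {(w, t). w \<in> D \<and> norm (L w) \<le> t}"
  proof (rule convexI)
    fix x y and u v :: real
    assume "x \<in> {(w, t). w \<in> D \<and> norm (L w) \<le> t}" "y \<in> {(w, t). w \<in> D \<and> norm (L w) \<le> t}"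
      and uv: "0 \<le> u" "0 \<le> v" "u + v = 1"
    then obtain w1 t1 w2 t2 where xy: "x = (w1, t1)" "y = (w2, t2)" "w1 \<in> D" "w2 \<in> D"
      "norm (L w1) \<le> t1" "norm (L w2) \<le> t2" by auto
    have "norm (L (u *\<^sub>R w1 + v *\<^sub>R w2)) \<le> u * norm (L w1) + v * norm (L w2)"
      using norm_triangle_ineq[of "u *\<^sub>R L w1" "v *\<^sub>R L w2"] uv
      by (simp add: linear_add[OF assms(2)] linear_scale[OF assms(2)])
    also have "\<dots> \<le> u * t1 + v * t2" using xy uv by (intro add_mono mult_left_mono) auto
    finally show "u *\<^sub>R x + v *\<^sub>R y \<in> {(w, t). w \<in> D \<and> norm (L w) \<le> t}"
      using xy uv convexD[OF assms(1)] by auto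
  qed
  ultimately show ?thesis unfolding ext_convex_def by simp
qed

definition sym_pairing :: "'a::real_normed_vector dual \<times> 'a dual dual \<Rightarrow> 'a dual \<times> 'a dual dual \<Rightarrow> real" where
  "sym_pairing A w = blinfun_apply (snd A) (fst w) + blinfun_apply (snd w) (fst A)"

definition gap :: "('a::real_normed_vector \<times> 'a dual) \<times> ('a dual \<times> 'a dual dual) \<Rightarrow> 'a dual \<times> 'a dual dual" where
  "gap p = (snd (fst p) + fst (snd p), canon (fst (fst p)) - snd (snd p))"

lemma sym_pairing_Pair [simp]: "sym_pairing (a, b) (y, Y) = blinfun_apply b y + blinfun_apply Y a"
  by (simp add: sym_pairing_def)

lemma gap_Pair [simp]: "gap ((x, x'), (y', y'')) = (x' + y', canon x - y'')"
  by (simp add: gap_def)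

lemma sym_pairing_diff_left: "sym_pairing (A - B) w = sym_pairing A w - sym_pairing B w"
  and sym_pairing_diff_right: "sym_pairing A (w - v) = sym_pairing A w - sym_pairing A v"
  and sym_pairing_scaleR_left: "sym_pairing (c *\<^sub>R A) w = c * sym_pairing A w"
  by (simp_all add: sym_pairing_def blinfun.bilinear_simps algebra_simps)

lemma sym_pairing_le_norm: "sym_pairing A w \<le> norm A * norm w"
proof -
  obtain a b y Y where A: "A = (a, b)" and w: "w = (y, Y)" by (cases A, cases w)
  have "sym_pairing A w \<le> norm b * norm y + norm a * norm Y"
    unfolding A w sym_pairing_Pair
    using blinfun_apply_le_norm[of b y] blinfun_apply_le_norm[of Y a] by (simp add: mult.commute)
  also have "\<dots> \<le> norm A * norm w"
    using pair_cauchy_schwarz[of "norm b" "norm y" "norm a" "norm Y"] by (simp add: A w norm_Pair add.commute)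
  finally show ?thesis .
qed

lemma sym_pairing_le_norm_unit: "norm w \<le> 1 \<Longrightarrow> sym_pairing A w \<le> norm A"
  using sym_pairing_le_norm[of A w] by (meson mult_left_le norm_ge_zero order_trans)

lemma linear_gap: "linear gap"
  by (rule linearI) (auto simp: gap_def canon_add canon_scaleR algebra_simps)

lemma continuous_on_gap: "continuous_on S gap"
  unfolding gap_def
  by (intro continuous_intros bounded_linear.continuous_on[OF bounded_linear_canon])

lemma pairZ_eq_sym_pairing_gap: "pairZ (fst p) (snd p) = sym_pairing (gap p) (snd p)"
  by (cases p) (auto simp: pairZ_def gap_def blinfun.bilinear_simps)

lemma pairZ_diff_eq:
  "pairZ (fst p - fst q) (snd p - snd q)
     = sym_pairing (gap p) (snd p) - sym_pairing (gap p) (snd q)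
       - sym_pairing (gap q) (snd p) + sym_pairing (gap q) (snd q)"
  using pairZ_eq_sym_pairing_gap[of "p - q"] linear_diff[OF linear_gap, of p q]
  by (simp add: sym_pairing_diff_left sym_pairing_diff_right)

definition gap_norm_on :: "(('a::real_normed_vector \<times> 'a dual) \<times> ('a dual \<times> 'a dual dual)) set
    \<Rightarrow> ('a \<times> 'a dual) \<times> ('a dual \<times> 'a dual dual) \<Rightarrow> ereal" where
  "gap_norm_on D p = (if p \<in> D then ereal (norm (gap p)) else \<infinity>)"

lemma hfun_eq_gap_norm_on:
  "hfun = gap_norm_on {p. snd (snd p) \<in> range canon \<and> norm (snd p) \<le> 1}"
proof
  fix p :: "('a \<times> 'a dual) \<times> ('a dual \<times> 'a dual dual)"
  obtain x x' y' y'' where "p = ((x, x'), (y', y''))" by (cases p) auto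
  then show "hfun p = gap_norm_on {p. snd (snd p) \<in> range canon \<and> norm (snd p) \<le> 1} p"
    by (simp add: hfun_def gap_norm_on_def norm_Pair add.commute)
qed

lemma conjugate_pairing_eq:
  "pairZ (fst r) (snd p) + pairZZ (embZ (fst p)) (snd r)
     = sym_pairing (gap r) (snd p) + sym_pairing (gap p) (snd r)"
  by (cases p; cases r) (auto simp: pairZ_def pairZZ_def embZ_def gap_def blinfun.bilinear_simps)

lemma JZ_hfun_ge:
  "ereal (sym_pairing (gap r) (snd p) + sym_pairing (gap p) (snd r)) - hfun r \<le> JZ hfun p"
  unfolding JZ_def conjZ_def by (rule SUP_upper2[of r]) (simp_all add: conjugate_pairing_eq)

lemma JZ_hfun_le:
  assumes "norm (snd p) \<le> 1"
  shows "JZ hfun p \<le> ereal (norm (gap p))"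
  unfolding JZ_def conjZ_def
proof (rule SUP_least)
  fix r :: "('a \<times> 'a dual) \<times> ('a dual \<times> 'a dual dual)"
  have "sym_pairing (gap r) (snd p) + sym_pairing (gap p) (snd r) - norm (gap r) \<le> norm (gap p)"
    if "norm (snd r) \<le> 1"
    using sym_pairing_le_norm_unit[OF assms, of "gap r"] sym_pairing_le_norm_unit[OF that, of "gap p"]
    by simp
  then show "ereal (pairZ (fst r) (fst (snd p, embZ (fst p))) + pairZZ (snd (snd p, embZ (fst p))) (snd r))
      - hfun r \<le> ereal (norm (gap p))"
    by (simp add: conjugate_pairing_eq hfun_eq_gap_norm_on gap_norm_on_def)
qed

lemma JZ_hfun_eq:
  assumes "norm (snd p) \<le> 1"
  shows "JZ hfun p = ereal (norm (gap p))"
proof (rule antisym)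
  show "JZ hfun p \<le> ereal (norm (gap p))" using JZ_hfun_le[OF assms] .
  show "ereal (norm (gap p)) \<le> JZ hfun p"
  proof (rule ereal_le_epsilon2)
    fix e :: real assume "e > 0"
    obtain a b where ab: "gap p = (a, b)" by (cases "gap p")
    obtain u w where uw: "norm (u, w) \<le> 1" "norm (a, b) - e \<le> blinfun_apply a u + blinfun_apply b w"
      using norm_pair_blinfun_approx[OF \<open>e > 0\<close>] by blast
    define r where "r = ((u, - w), (w, canon u))"
    have "hfun r = 0"
      using uw(1) by (simp add: r_def hfun_eq_gap_norm_on gap_norm_on_def norm_Pair add.commute zero_ereal_def)
    then have lower: "ereal (blinfun_apply a u + blinfun_apply b w) \<le> JZ hfun p"
      using JZ_hfun_ge[of r p] by (simp add: r_def ab zero_prod_def sym_pairing_def add.commute)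
    have "ereal (norm (gap p)) \<le> ereal (blinfun_apply a u + blinfun_apply b w) + ereal e"
      using uw(2) ab by simp
    also have "\<dots> \<le> JZ hfun p + ereal e" using lower by (rule add_right_mono)
    finally show "ereal (norm (gap p)) \<le> JZ hfun p + ereal e" .
  qed
qed

lemma JZ_hfun_infinite:
  assumes "norm (snd p) > 1"
  shows "JZ hfun p = \<infinity>"
proof -
  obtain y' y'' where p: "snd p = (y', y'')" by (cases "snd p")
  define R where "R = norm (y', y'')"
  have "R > 1" using assms p R_def by simp
  obtain u w where uw: "norm (u, w) \<le> 1" "R - (R - 1)/2 \<le> blinfun_apply y' u + blinfun_apply y'' w"
    using norm_pair_blinfun_approx[of "(R - 1)/2" y' y''] \<open>R > 1\<close> R_def by auto
  define \<kappa> where "\<kappa> = blinfun_apply y' u + blinfun_apply y'' w - norm (u, w)"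
  have "\<kappa> > 0" using uw \<open>R > 1\<close> by (simp add: \<kappa>_def field_simps)
  show ?thesis
  proof (rule ereal_top)
    fix M :: real
    define t where "t = \<bar>M\<bar> / \<kappa>"
    have "t \<ge> 0" using \<open>\<kappa> > 0\<close> by (simp add: t_def)
    define r where "r = ((t *\<^sub>R u, t *\<^sub>R w), (0 :: 'a dual, 0 :: 'a dual dual))"
    have "norm (t *\<^sub>R w, canon (t *\<^sub>R u)) = t * norm (u, w)"
      using \<open>t \<ge> 0\<close> by (simp add: norm_Pair canon_scaleR power_mult_distrib add.commute real_sqrt_mult
          flip: distrib_left)
    then have "hfun r = ereal (t * norm (u, w))"
      by (simp add: r_def hfun_eq_gap_norm_on gap_norm_on_def image_iff) (metis canon_zero)
    moreover have "sym_pairing (gap r) (snd p) = t * (blinfun_apply y' u + blinfun_apply y'' w)"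
      by (simp add: r_def p canon_scaleR blinfun.bilinear_simps distrib_left)
    ultimately have "ereal (t * \<kappa>) \<le> JZ hfun p"
      using JZ_hfun_ge[of r p] by (simp add: r_def sym_pairing_def \<kappa>_def right_diff_distrib)
    moreover have "M \<le> t * \<kappa>" using \<open>\<kappa> > 0\<close> by (simp add: t_def)
    ultimately show "ereal M \<le> JZ hfun p" by (meson ereal_less_eq(3) order_trans)
  qed
qed

lemma JZ_hfun_eq_gap_norm_on: "JZ hfun = gap_norm_on {p. norm (snd p) \<le> 1}"
  using JZ_hfun_eq JZ_hfun_infinite by (force simp: fun_eq_iff gap_norm_on_def)

lemma ext_closed_gap_norm_on: "closed D \<Longrightarrow> ext_closed (gap_norm_on D)"
  unfolding gap_norm_on_def[abs_def] by (rule ext_closed_norm_on[OF _ continuous_on_gap])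

lemma ext_convex_gap_norm_on: "convex D \<Longrightarrow> ext_convex (gap_norm_on D)"
  unfolding gap_norm_on_def[abs_def] by (rule ext_convex_norm_on[OF _ linear_gap])

lemma closed_convex_snd_unit_ball:
  "closed {p :: 'b::real_normed_vector \<times> 'c::real_normed_vector. norm (snd p) \<le> 1}"
  "convex {p :: 'b \<times> 'c. norm (snd p) \<le> 1}"
proof -
  have "{p :: 'b \<times> 'c. norm (snd p) \<le> 1} = UNIV \<times> cball 0 1" by auto
  then show "closed {p :: 'b \<times> 'c. norm (snd p) \<le> 1}" "convex {p :: 'b \<times> 'c. norm (snd p) \<le> 1}"
    by (simp_all add: closed_Times convex_Times)
qed

lemma closed_convex_hfun_domain:
  "closed {p :: ('a::banach \<times> 'a dual) \<times> ('a dual \<times> 'a dual dual). snd (snd p) \<in> range canon \<and> norm (snd p) \<le> 1}"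
  "convex {p :: ('a \<times> 'a dual) \<times> ('a dual \<times> 'a dual dual). snd (snd p) \<in> range canon \<and> norm (snd p) \<le> 1}"
proof -
  have "{p :: ('a \<times> 'a dual) \<times> ('a dual \<times> 'a dual dual). snd (snd p) \<in> range canon \<and> norm (snd p) \<le> 1}
      = UNIV \<times> ((UNIV \<times> range canon) \<inter> cball 0 1)" by auto
  moreover have "convex (range (canon :: 'a \<Rightarrow> 'a dual dual))"
    by (simp add: convex_linear_image linear_canon)
  ultimately show "closed {p :: ('a \<times> 'a dual) \<times> ('a dual \<times> 'a dual dual). snd (snd p) \<in> range canon \<and> norm (snd p) \<le> 1}"
    "convex {p :: ('a \<times> 'a dual) \<times> ('a dual \<times> 'a dual dual). snd (snd p) \<in> range canon \<and> norm (snd p) \<le> 1}"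
    by (simp_all add: closed_Times convex_Times closed_Int convex_Int closed_range_canon)
qed

definition T_graph :: "(('a::real_normed_vector \<times> 'a dual) \<times> ('a dual \<times> 'a dual dual)) set" where
  "T_graph = {p. norm (snd p) \<le> 1 \<and> sym_pairing (gap p) (snd p) = norm (gap p)}"

definition monotonically_related ::
    "(('a::real_normed_vector \<times> 'a dual) \<times> ('a dual \<times> 'a dual dual)) set
      \<Rightarrow> ('a \<times> 'a dual) \<times> ('a dual \<times> 'a dual dual) \<Rightarrow> bool" where
  "monotonically_related S q \<longleftrightarrow> (\<forall>p\<in>S. pairZ (fst p - fst q) (snd p - snd q) \<ge> 0)"

lemma JZ_hfun_eq_pairZ_iff: "JZ hfun p = ereal (pairZ (fst p) (snd p)) \<longleftrightarrow> p \<in> T_graph"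
  by (auto simp: JZ_hfun_eq_gap_norm_on gap_norm_on_def pairZ_eq_sym_pairing_gap T_graph_def)

lemma monotone_opZ_T_graph: "monotone_opZ T_graph"
  unfolding monotone_opZ_def T_graph_def pairZ_diff_eq
  using sym_pairing_le_norm_unit by (smt (verit) mem_Collect_eq)

lemma maximal_monotoneZ_if_related_mem:
  assumes "monotone_opZ S" and "\<And>q. monotonically_related S q \<Longrightarrow> q \<in> S"
  shows "maximal_monotoneZ S"
  using assms unfolding maximal_monotoneZ_def monotone_opZ_def monotonically_related_def by blast

lemma T_graph_gap_zero: "norm (snd p) \<le> 1 \<Longrightarrow> gap p = 0 \<Longrightarrow> p \<in> T_graph"
  by (simp add: T_graph_def sym_pairing_def zero_prod_def)

lemma related_T_graph_sym_pairing_eq: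
  assumes "monotonically_related T_graph q" and "norm (snd q) \<le> 1"
  shows "sym_pairing (gap q) (snd q) = norm (gap q)"
proof (rule antisym)
  show "sym_pairing (gap q) (snd q) \<le> norm (gap q)" using assms(2) by (rule sym_pairing_le_norm_unit)
  obtain a b where ab: "gap q = (a, b)" by (cases "gap q")
  show "norm (gap q) \<le> sym_pairing (gap q) (snd q)"
  proof (rule field_le_epsilon)
    fix e :: real assume "e > 0"
    then obtain u y where uy: "norm (u, y) \<le> 1" "norm (a, b) - e \<le> blinfun_apply a u + blinfun_apply b y"
      using norm_pair_blinfun_approx by blast
    define p where "p = ((u, - y), (y, canon u))"
    have "norm (snd p) \<le> 1" using uy(1) by (simp add: p_def norm_Pair add.commute)
    moreover have "gap p = 0" by (simp add: p_def zero_prod_def)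
    ultimately have "pairZ (fst p - fst q) (snd p - snd q) \<ge> 0"
      using assms(1) T_graph_gap_zero unfolding monotonically_related_def by blast
    then have "sym_pairing (gap q) (snd p) \<le> sym_pairing (gap q) (snd q)"
      by (simp add: pairZ_diff_eq \<open>gap p = 0\<close> sym_pairing_def zero_prod_def)
    then show "norm (gap q) \<le> sym_pairing (gap q) (snd q) + e"
      using uy(2) by (simp add: ab p_def)
  qed
qed

lemma related_T_graph_ray_bound:
  assumes related: "monotonically_related T_graph q"
    and w: "norm w \<le> 1" "snd w \<in> range canon"
    and A: "sym_pairing A w = norm A" "snd A \<in> range canon"
  shows "sym_pairing A (snd q) \<le> norm A"
proof (rule ccontr)
  assume "\<not> ?thesis"
  then have P: "sym_pairing A (snd q) - norm A > 0" by simp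
  define C where "C = sym_pairing (gap q) (snd q) - sym_pairing (gap q) w"
  define m where "m = (\<bar>C\<bar> + 1) / (sym_pairing A (snd q) - norm A)"
  have "m \<ge> 0" using P by (simp add: m_def)
  obtain x where x: "canon x = m *\<^sub>R snd A + snd w"
    using A(2) w(2) by (auto simp flip: canon_scaleR canon_add)
  define p where "p = ((x, m *\<^sub>R fst A - fst w), w)"
  have gap_p: "gap p = m *\<^sub>R A" by (simp add: p_def gap_def x prod_eq_iff)
  have "p \<in> T_graph"
    unfolding T_graph_def mem_Collect_eq gap_p
    using w(1) A(1) \<open>m \<ge> 0\<close> by (simp add: p_def sym_pairing_scaleR_left)
  then have "0 \<le> pairZ (fst p - fst q) (snd p - snd q)"
    using related unfolding monotonically_related_def by blast
  also have "\<dots> = C - m * (sym_pairing A (snd q) - norm A)"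
    unfolding pairZ_diff_eq gap_p using A(1) \<open>m \<ge> 0\<close>
    by (simp add: p_def C_def sym_pairing_scaleR_left algebra_simps)
  also have "\<dots> = C - (\<bar>C\<bar> + 1)" using P by (simp add: m_def)
  finally show False by linarith
qed

lemma related_T_graph_pairing_le:
  fixes q :: "('a::real_normed_vector \<times> 'a dual) \<times> ('a dual \<times> 'a dual dual)"
    and e x0 :: 'a and y a :: "'a dual" and s t :: real
  assumes related: "monotonically_related T_graph q" and q: "snd q = (v, V)"
    and e: "norm e = 1" and y: "norm y \<le> 1" "blinfun_apply y e = 1"
    and a: "norm a = 1" "norm x0 = 1" "blinfun_apply a x0 = 1"
    and st: "s \<ge> 0" "t \<ge> 0" "s\<^sup>2 + t\<^sup>2 = 1"
  shows "s * blinfun_apply v e + t * blinfun_apply V a \<le> 1"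
proof -
  define A where "A = (t *\<^sub>R a, s *\<^sub>R canon e)"
  define w where "w = (s *\<^sub>R y, canon (t *\<^sub>R x0))"
  have "norm A = 1" using st a(1) e by (simp add: A_def norm_Pair power_mult_distrib add.commute)
  moreover have "norm w \<le> 1"
  proof -
    have "s\<^sup>2 * (norm y)\<^sup>2 \<le> s\<^sup>2" using y(1) by (simp add: mult_left_le power_le_one)
    then have "(norm w)\<^sup>2 \<le> 1" using st(3) a(2) by (simp add: w_def norm_Pair power_mult_distrib)
    then show ?thesis by (simp add: power_le_one_iff)
  qed
  moreover have "sym_pairing A w = 1"
    using st(3) y(2) a(3) by (simp add: A_def w_def blinfun.scaleR_left blinfun.scaleR_right power2_eq_square)
  moreover have "snd A \<in> range canon" "snd w \<in> range canon"
    by (auto simp: A_def w_def simp flip: canon_scaleR)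
  ultimately have "sym_pairing A (snd q) \<le> 1"
    using related_T_graph_ray_bound[OF related, of w A] by simp
  then show ?thesis by (simp add: q A_def blinfun.scaleR_left blinfun.scaleR_right)
qed

lemma related_T_graph_snd_norm_le:
  fixes q :: "('a::banach \<times> 'a dual) \<times> ('a dual \<times> 'a dual dual)"
  assumes "x1 \<noteq> (0::'a)" and related: "monotonically_related T_graph q"
  shows "norm (snd q) \<le> 1"
proof (rule ccontr)
  assume big: "\<not> norm (snd q) \<le> 1"
  obtain v V where q: "snd q = (v, V)" by (cases "snd q")
  define R where "R = norm (v, V)"
  have "R > 1" using big q R_def by simp
  define \<delta> where "\<delta> = (R - 1) / 4"
  have "\<delta> > 0" using \<open>R > 1\<close> by (simp add: \<delta>_def)
  have "norm ((1 / norm x1) *\<^sub>R x1) = 1" using assms(1) by simp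
  then obtain e where e: "norm e = 1" "norm v - \<delta> \<le> blinfun_apply v e"
    using norm_blinfun_approx_sphere \<open>\<delta> > 0\<close> by blast
  obtain y :: "'a dual" where y: "norm y \<le> 1" "blinfun_apply y e = 1"
    using norming_functional[of e] e(1) by auto
  obtain a x0 where a: "norm a = 1" "norm x0 = 1" "blinfun_apply a x0 = 1" "norm V - \<delta> \<le> blinfun_apply V a"
    using norm_attaining_functional_near[OF assms(1) \<open>\<delta> > 0\<close>] by blast
  define s where "s = norm v / R"
  define t where "t = norm V / R"
  have R2: "(norm v)\<^sup>2 + (norm V)\<^sup>2 = R * R" by (simp add: R_def norm_Pair flip: power2_eq_square)
  have st: "s \<ge> 0" "t \<ge> 0" "s\<^sup>2 + t\<^sup>2 = 1" "s * norm v + t * norm V = R"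
  proof -
    show "s \<ge> 0" "t \<ge> 0" using \<open>R > 1\<close> by (simp_all add: s_def t_def)
    have "s\<^sup>2 + t\<^sup>2 = ((norm v)\<^sup>2 + (norm V)\<^sup>2) / (R * R)"
      by (simp add: s_def t_def power_divide add_divide_distrib power2_eq_square)
    then show "s\<^sup>2 + t\<^sup>2 = 1" using R2 \<open>R > 1\<close> by simp
    have "s * norm v + t * norm V = ((norm v)\<^sup>2 + (norm V)\<^sup>2) / R"
      by (simp add: s_def t_def add_divide_distrib power2_eq_square)
    then show "s * norm v + t * norm V = R" using R2 \<open>R > 1\<close> by simp
  qed
  have "s \<le> 1" "t \<le> 1" using st by (smt (verit) power2_eq_square mult_le_cancel_left1 zero_le_power2)+
  then have "\<delta> * (s + t) \<le> \<delta> * 2" using \<open>\<delta> > 0\<close> by (intro mult_left_mono) auto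
  then have "R - 2 * \<delta> \<le> s * (norm v - \<delta>) + t * (norm V - \<delta>)"
    using st(4) by (simp add: algebra_simps)
  also have "\<dots> \<le> s * blinfun_apply v e + t * blinfun_apply V a"
    using e(2) a(4) st(1,2) by (simp add: add_mono mult_left_mono)
  also have "\<dots> \<le> 1"
    using related_T_graph_pairing_le[OF related q e(1) y a(1-3) st(1-3)] .
  finally show False using \<open>R > 1\<close> by (simp add: \<delta>_def field_simps)
qed

lemma maximal_monotoneZ_T_graph:
  fixes x1 :: "'a::banach"
  assumes "x1 \<noteq> 0"
  shows "maximal_monotoneZ (T_graph :: (('a \<times> 'a dual) \<times> ('a dual \<times> 'a dual dual)) set)"
proof (rule maximal_monotoneZ_if_related_mem[OF monotone_opZ_T_graph])
  fix q :: "('a \<times> 'a dual) \<times> ('a dual \<times> 'a dual dual)"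
  assume related: "monotonically_related T_graph q"
  then have "norm (snd q) \<le> 1" by (rule related_T_graph_snd_norm_le[OF assms])
  then show "q \<in> T_graph"
    using related_T_graph_sym_pairing_eq[OF related] unfolding T_graph_def by simp
qed

lemma exists_nonzero_if_not_surj_canon:
  assumes "\<not> surj (canon :: 'a::real_normed_vector \<Rightarrow> 'a dual dual)"
  shows "\<exists>x :: 'a. x \<noteq> 0"
proof (rule ccontr)
  assume "\<not> ?thesis"
  then have zero: "\<And>x :: 'a. x = 0" by blast
  have "f = 0" for f :: "'a dual" by (rule blinfun_eqI) (metis zero blinfun.zero_right)
  then have "V = canon 0" for V :: "'a dual dual" by (metis blinfun.zero_right blinfun_eqI canon_zero)
  then show False using assms by (metis surjI)
qed

lemma T_graph_interior_gap_zero: "p \<in> T_graph \<Longrightarrow> norm (snd p) < 1 \<Longrightarrow> gap p = 0"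
  using sym_pairing_le_norm[of "gap p" "snd p"]
  by (simp add: T_graph_def) (smt (verit, best) mult_le_cancel_left1 norm_le_zero_iff)

lemma gossez_witness_related:
  assumes "norm Y \<le> 1" and "q \<in> T_graph"
  shows "pairZZ ((Y, 0) - embZ (fst q)) ((0, Y) - snd q) \<ge> 0"
proof -
  obtain x x' y' y'' where q: "q = ((x, x'), (y', y''))" by (cases q) auto
  have "blinfun_apply Y (x' + y') \<le> norm (x' + y')"
    using blinfun_apply_le_norm[of Y "x' + y'"] assms(1) by (meson mult_left_le_one_le norm_ge_zero order_trans)
  also have "\<dots> \<le> norm (gap q)" by (simp add: q norm_fst_le)
  also have "\<dots> = sym_pairing (gap q) (snd q)" using assms(2) by (simp add: T_graph_def)
  finally show ?thesis
    by (simp add: q embZ_def pairZZ_def blinfun.bilinear_simps)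
qed

lemma not_gossez_D_T_graph:
  assumes "\<not> surj (canon :: 'a::banach \<Rightarrow> 'a dual dual)"
  shows "\<not> gossez_D (T_graph :: (('a \<times> 'a dual) \<times> ('a dual \<times> 'a dual dual)) set)"
proof
  assume D: "gossez_D (T_graph :: (('a \<times> 'a dual) \<times> ('a dual \<times> 'a dual dual)) set)"
  obtain Y :: "'a dual dual" where Y: "Y \<notin> range canon" using assms by blast
  then have "Y \<noteq> 0" by (metis canon_zero rangeI)
  define Y0 where "Y0 = (1 / (2 * norm Y)) *\<^sub>R Y"
  have "norm Y0 = 1/2" using \<open>Y \<noteq> 0\<close> by (simp add: Y0_def)
  have "Y0 \<notin> range canon"
  proof
    assume "Y0 \<in> range canon"
    then have "(2 * norm Y) *\<^sub>R Y0 \<in> range canon" by (auto simp flip: canon_scaleR)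
    then show False using Y \<open>Y \<noteq> 0\<close> by (simp add: Y0_def)
  qed
  have "\<forall>q\<in>T_graph. pairZZ ((Y0, 0) - embZ (fst q)) ((0, Y0) - snd q) \<ge> 0"
    using gossez_witness_related[of Y0] \<open>norm Y0 = 1/2\<close> by simp
  then obtain F B where F: "F \<noteq> bot" "B \<subseteq> T_graph" "F \<le> principal B" "(snd \<longlongrightarrow> (0, Y0)) F"
    using D[unfolded gossez_D_def, THEN conjunct2, rule_format, of "(Y0, 0)" "(0, Y0)"] by blast
  have "Y0 \<in> closure (range canon)"
    unfolding closure_approachable
  proof (intro allI impI)
    fix \<epsilon> :: real assume "\<epsilon> > 0"
    then have "eventually (\<lambda>p. dist (snd p) (0, Y0) < min \<epsilon> (1/2)) F"
      using F(4) by (intro tendstoD) auto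
    moreover have "eventually (\<lambda>p. p \<in> B) F" using F(3) by (simp add: le_principal)
    ultimately obtain p where p: "p \<in> T_graph" "dist (snd p) (0, Y0) < min \<epsilon> (1/2)"
      using eventually_happens'[OF F(1) eventually_conj] F(2) by blast
    obtain x x' y' y'' where p_eq: "p = ((x, x'), (y', y''))" by (cases p) auto
    have "norm (snd p) \<le> norm (0 :: 'a dual, Y0) + dist (snd p) (0, Y0)"
      using norm_triangle_sub[of "snd p" "(0, Y0)"] by (simp add: dist_norm)
    then have "norm (snd p) < 1" using p(2) \<open>norm Y0 = 1/2\<close> by (simp add: norm_Pair)
    then have "canon x = y''" using T_graph_interior_gap_zero[OF p(1)] by (simp add: p_eq zero_prod_def)
    moreover have "dist y'' Y0 \<le> dist (snd p) (0, Y0)"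
      using norm_snd_le[of "y'' - Y0" y'] by (simp add: p_eq dist_norm)
    ultimately have "dist (canon x) Y0 < \<epsilon>" using p(2) by simp
    then show "\<exists>y\<in>range canon. dist y Y0 < \<epsilon>" by blast
  qed
  then show False using \<open>Y0 \<notin> range canon\<close> closure_closed[OF closed_range_canon] by auto
qed

lemma gap_norm_on_ge_pairZ:
  "D \<subseteq> {p. norm (snd p) \<le> 1} \<Longrightarrow> gap_norm_on D p \<ge> ereal (pairZ (fst p) (snd p))"
  using sym_pairing_le_norm_unit[of "snd p" "gap p"]
  by (auto simp: gap_norm_on_def pairZ_eq_sym_pairing_gap)

lemma bounded_snd_gap_norm_on_finite:
  "D \<subseteq> {p. norm (snd p) \<le> 1} \<Longrightarrow> bounded (snd ` {p. gap_norm_on D p < \<infinity>})"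
  by (rule bounded_subset[OF bounded_cball[of 0 1]]) (auto simp: gap_norm_on_def split: if_split_asm)

theorem theorem5p2:
  fixes h :: "('a::banach \<times> 'a dual) \<times> ('a dual \<times> 'a dual dual) \<Rightarrow> ereal"
    and T :: "(('a \<times> 'a dual) \<times> ('a dual \<times> 'a dual dual)) set"
  assumes nonrefl: "\<not> surj (canon :: 'a \<Rightarrow> 'a dual dual)"
    and h_def: "h = hfun"
    and T_def: "T = {p. JZ h p = ereal (pairZ (fst p) (snd p))}"
  shows "(ext_closed h \<and> ext_convex h \<and> bounded (snd ` {p. h p < \<infinity>})
          \<and> (\<forall>p. h p \<ge> ereal (pairZ (fst p) (snd p)))
          \<and> (\<forall>p. JZ h p \<ge> ereal (pairZ (fst p) (snd p))))
       \<and> (maximal_monotoneZ T \<and> bounded (snd ` T) \<and> fitz_family T (JZ h))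
       \<and> \<not> gossez_D T"
proof -
  have h: "h = gap_norm_on {p. snd (snd p) \<in> range canon \<and> norm (snd p) \<le> 1}"
    by (simp add: h_def hfun_eq_gap_norm_on)
  have Jh: "JZ h = gap_norm_on {p. norm (snd p) \<le> 1}"
    by (simp add: h_def JZ_hfun_eq_gap_norm_on)
  have T: "T = T_graph" unfolding T_def h_def JZ_hfun_eq_pairZ_iff by simp
  obtain x1 :: 'a where "x1 \<noteq> 0" using exists_nonzero_if_not_surj_canon[OF nonrefl] by blast
  have "ext_closed h \<and> ext_convex h \<and> bounded (snd ` {p. h p < \<infinity>})
      \<and> (\<forall>p. h p \<ge> ereal (pairZ (fst p) (snd p)))"
    unfolding h
    by (intro conjI allI ext_closed_gap_norm_on ext_convex_gap_norm_on closed_convex_hfun_domain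
        gap_norm_on_ge_pairZ bounded_snd_gap_norm_on_finite) auto
  moreover have "fitz_family T (JZ h)"
    unfolding fitz_family_def using T_def
    by (auto simp only: Jh intro!: ext_closed_gap_norm_on ext_convex_gap_norm_on
        closed_convex_snd_unit_ball gap_norm_on_ge_pairZ)
  moreover have "bounded (snd ` T)"
    by (rule bounded_subset[OF bounded_cball[of 0 1]]) (auto simp: T T_graph_def)
  ultimately show ?thesis
    using maximal_monotoneZ_T_graph[OF \<open>x1 \<noteq> 0\<close>] not_gossez_D_T_graph[OF nonrefl]
    by (simp add: T fitz_family_def)
qed

end
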